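(* There is a function $\eta(X)\to0$ as $X\to\infty$ and an absolute constant $C$ such that the following holds. Let $h=h(X)$ satisfy $h(X)\to\infty$ as $X\to\infty$ and $h\le \exp\left(\sqrt{\left(\tfrac12-\eta(X)\right)\log X\,\log\log X}\right)$. Then for all sufficiently large $X$ and all $T$ with $X/h\le T\le X$, $$\frac{1}{hT}\int_{X^{1/2}}^{T}\Big|\sum_{\substack{X\le n\le 4X\\ p\mid n\,\Rightarrow\, p\le h}}\frac{\lambda(n)}{n^{\frac12+it}}\Big|^2\,\mathrm{d}t\le \frac{C}{h},$$ where the inner sum is over integers $n\in[X,4X]$ all of whose prime factors are at most $h$.
   Context: $\lambda$ denotes the Liouville function, i.e. the completely multiplicative function with $\lambda(p)=-1$ for every prime $p$. *)

theory Defs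
  imports "HOL-Analysis.Analysis" "HOL-Computational_Algebra.Primes"
begin

definition liouville :: "nat \<Rightarrow> int" where
  "liouville n = (-1) ^ size (prime_factorization n)"

definition smooth_range :: "real \<Rightarrow> real \<Rightarrow> nat set" where
  "smooth_range X h = {n::nat. X \<le> real n \<and> real n \<le> 4 * X \<and>
      (\<forall>p. prime p \<and> p dvd n \<longrightarrow> real p \<le> h)}"

definition smooth_dirichlet_poly :: "real \<Rightarrow> real \<Rightarrow> real \<Rightarrow> complex" where
  "smooth_dirichlet_poly X h t =
     (\<Sum>n\<in>smooth_range X h. of_int (liouville n) / (of_nat n) powr (1/2 + \<i> * of_real t))"

end

theory Submission
  imports Defs "HOL-Real_Asymp.Real_Asymp"
begin

text \<open>
  By a weak mean value theorem for Dirichlet polynomials, the integral of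
  |\<Sum> \<lambda>(n) n^(-1/2-it)|^2 over [sqrt X, T] is at most N (T/X + 16 (1 + log 4X)), where N counts
  the h-smooth integers in [X, 4X]; for T \<ge> X/h this is at most T once
  N (1 + 16 h (1 + log 4X)) \<le> X, which gives the bound with C = 1.

  Rankin's trick with exponent 1 - \<delta> bounds N by (4X)^(1-\<delta>) exp (4 \<Sum>_{p \<le> h} p^(\<delta>-1)), and
  Chebyshev's bound \<Prod>_{p \<le> n} p \<le> 4^n on dyadic blocks gives
  \<Sum>_{p \<le> y} p^(\<delta>-1) = O(y^\<delta> / log y^\<delta>). Taking log h \<le> H and \<delta> = log log X / 2H makes
  h^\<delta> \<le> sqrt (log X), so the prime sum is negligible, and the saving X^(-\<delta>) beats the loss h
  exactly when H \<le> (1 - o(1)) sqrt (log X log log X / 2).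
\<close>

lemma prod_primes_dvd:
  fixes A :: "nat set"
  assumes "finite A" "\<And>p. p \<in> A \<Longrightarrow> prime p \<and> p dvd k"
  shows "\<Prod>A dvd k"
  using assms
proof (induction A rule: finite_induct)
  case empty
  then show ?case by simp
next
  case (insert p A)
  have "\<not> p dvd \<Prod>A"
  proof
    assume "p dvd \<Prod>A"
    then obtain q where "q \<in> A" "p dvd q"
      using insert by (auto simp: prime_dvd_prod_iff)
    then show False
      using insert primes_dvd_imp_eq by blast
  qed
  then have "coprime p (\<Prod>A)"
    using insert by (intro prime_imp_coprime) auto
  then show ?case
    using insert by (simp add: divides_mult)
qed

lemma binomial_odd_le_4_pow: "(2*m+1) choose m \<le> 4^m"
proof -
  have "(2*m+1) choose m \<le> (\<Sum>k\<le>m. (2*m+1) choose k)"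
    by (rule member_le_sum) auto
  also have "\<dots> = 4^m"
    by (subst binomial_r_part_sum) (simp add: power_mult)
  finally show ?thesis .
qed

lemma prod_primes_between_dvd_binomial:
  "\<Prod>{p. prime p \<and> m+1 < p \<and> p \<le> 2*m+1} dvd ((2*m+1) choose m)"
proof (rule prod_primes_dvd)
  fix p assume p: "p \<in> {p. prime p \<and> m+1 < p \<and> p \<le> 2*m+1}"
  have "fact m * fact (m+1) * ((2*m+1) choose m) = (fact (2*m+1) :: nat)"
    using binomial_fact_lemma[of m "2*m+1"] by (simp add: algebra_simps)
  moreover have "p dvd (fact (2*m+1) :: nat)" "\<not> p dvd (fact m :: nat)" "\<not> p dvd (fact (m+1) :: nat)"
    using p by (simp_all add: prime_dvd_fact_iff del: fact_Suc)
  ultimately show "prime p \<and> p dvd ((2*m+1) choose m)"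
    using p by (metis mem_Collect_eq prime_dvd_mult_iff)
qed auto

lemma primorial_le_4_pow: "\<Prod>{p::nat. prime p \<and> p \<le> n} \<le> 4^n"
proof (induction n rule: less_induct)
  case (less n)
  consider "n \<le> 2" | "n > 2" "even n" | m where "n > 2" "n = 2*m+1"
    by (metis oddE not_le)
  then show ?case
  proof cases
    case 1
    then have "{p::nat. prime p \<and> p \<le> n} = (if n = 2 then {2} else {})"
      by (auto dest: prime_ge_2_nat)
    then show ?thesis by simp
  next
    case 2
    then have "\<not> prime n"
      using prime_odd_nat by blast
    then have "p \<le> n \<longleftrightarrow> p \<le> n - 1" if "prime p" for p
      using that by (cases "p = n") auto
    then have "{p::nat. prime p \<and> p \<le> n} = {p. prime p \<and> p \<le> n - 1}"
      by blast
    then show ?thesis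
      using less[of "n - 1"] 2 by (simp add: order.trans[OF _ power_increasing])
  next
    case 3
    have split: "{p::nat. prime p \<and> p \<le> n}
        = {p. prime p \<and> p \<le> m+1} \<union> {p. prime p \<and> m+1 < p \<and> p \<le> 2*m+1}"
      using 3 by auto
    have "\<Prod>{p. prime p \<and> m+1 < p \<and> p \<le> 2*m+1} \<le> (2*m+1) choose m"
      by (rule dvd_imp_le[OF prod_primes_between_dvd_binomial]) simp
    then have "\<Prod>{p::nat. prime p \<and> p \<le> n} \<le> 4^(m+1) * 4^m"
      unfolding split using less[of "m+1"] 3 binomial_odd_le_4_pow[of m]
      by (subst prod.union_disjoint) (auto intro!: mult_le_mono)
    also have "(4::nat)^(m+1) * 4^m = 4^n"
      using 3 by (simp flip: power_add)
    finally show ?thesis .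
  qed
qed

lemma card_primes_dyadic_le:
  assumes "j \<ge> 1"
  shows "j * card {p::nat. prime p \<and> 2^j < p \<and> p \<le> 2^(j+1)} \<le> 2^(j+2)"
proof -
  define B where "B = {p::nat. prime p \<and> 2^j < p \<and> p \<le> 2^(j+1)}"
  have "(2::nat)^(j * card B) = (\<Prod>p\<in>B. 2^j)"
    by (simp add: power_mult)
  also have "\<dots> \<le> \<Prod>B"
    by (rule prod_mono) (auto simp: B_def)
  also have "\<Prod>B \<le> \<Prod>{p::nat. prime p \<and> p \<le> 2^(j+1)}"
    by (rule dvd_imp_le[OF prod_dvd_prod_subset]) (auto simp: B_def prime_gt_0_nat intro: prod_pos)
  also have "\<dots> \<le> 4^(2^(j+1))"
    by (rule primorial_le_4_pow)
  also have "\<dots> = 2^(2^(j+2))"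
    by (simp add: power_mult)
  finally show ?thesis
    unfolding B_def[symmetric] using power_increasing_iff[of "2::nat"] by simp
qed

lemma sum_primes_dyadic_powr_le:
  assumes "j \<ge> 1" "0 \<le> \<delta>" "\<delta> \<le> 1"
  shows "(\<Sum>p\<in>{p::nat. prime p \<and> 2^j < p \<and> p \<le> 2^(j+1)}. real p powr (\<delta>-1))
         \<le> 8 * (2 powr \<delta>)^j / j"
proof -
  define B where "B = {p::nat. prime p \<and> 2^j < p \<and> p \<le> 2^(j+1)}"
  have "real p powr (\<delta>-1) \<le> (2 powr \<delta>)^(j+1) / 2^j" if "p \<in> B" for p
  proof -
    have "2^j < p" "p \<le> 2^(j+1)"
      using that by (simp_all add: B_def)
    then have p: "2^j < real p" "real p \<le> 2^(j+1)"
      by (metis of_nat_less_iff of_nat_numeral of_nat_power,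
          metis of_nat_le_iff of_nat_numeral of_nat_power)
    have "real p powr (\<delta>-1) = real p powr \<delta> / real p"
      using p by (simp add: powr_diff)
    also have "\<dots> \<le> (2^(j+1)) powr \<delta> / 2^j"
      using p assms by (intro frac_le powr_mono2) auto
    also have "((2::real)^(j+1)) powr \<delta> = (2 powr real (j+1)) powr \<delta>"
      by (subst powr_realpow) auto
    also have "\<dots> = 2 powr (real (j+1) * \<delta>)"
      by (rule powr_powr)
    also have "\<dots> = (2 powr \<delta>) powr real (j+1)"
      by (simp add: powr_powr mult.commute)
    also have "\<dots> = (2 powr \<delta>)^(j+1)"
      by (rule powr_realpow) simp
    finally show ?thesis .
  qed
  then have "(\<Sum>p\<in>B. real p powr (\<delta>-1)) \<le> card B * ((2 powr \<delta>)^(j+1) / 2^j)"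
    by (rule sum_bounded_above)
  also have "\<dots> \<le> (2^(j+2) / j) * ((2 powr \<delta>)^(j+1) / 2^j)"
  proof (rule mult_right_mono)
    have "real (j * card B) \<le> 2^(j+2)"
      using card_primes_dyadic_le[OF assms(1)] unfolding B_def
      by (metis of_nat_le_iff of_nat_numeral of_nat_power)
    then show "real (card B) \<le> 2^(j+2) / j"
      using assms(1) by (simp add: field_simps)
  qed simp
  also have "\<dots> = 4 * 2 powr \<delta> * (2 powr \<delta>)^j / j"
    by (simp add: field_simps power_add)
  also have "\<dots> \<le> 8 * (2 powr \<delta>)^j / j"
  proof -
    have "2 powr \<delta> \<le> (2::real)"
      using powr_mono[of \<delta> 1 2] assms by simp
    then show ?thesis
      by (intro divide_right_mono mult_right_mono) auto
  qed
  finally show ?thesis unfolding B_def .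
qed

lemma sum_primes_le_two_pow_powr_le:
  assumes "0 \<le> \<delta>" "\<delta> \<le> 1"
  shows "(\<Sum>p\<in>{p::nat. prime p \<and> p \<le> 2^(M+1)}. real p powr (\<delta>-1))
         \<le> 1 + 8 * (\<Sum>j=1..M. (2 powr \<delta>)^j / j)"
proof (induction M)
  case 0
  have "{p::nat. prime p \<and> p \<le> 2^(0+1)} = {2}"
    by (auto dest: prime_ge_2_nat)
  moreover have "(2::real) powr (\<delta> - 1) \<le> 1"
    using assms powr_mono[of "\<delta> - 1" 0 2] by simp
  ultimately show ?case by simp
next
  case (Suc M)
  have split: "{p::nat. prime p \<and> p \<le> 2^(Suc M+1)}
      = {p. prime p \<and> p \<le> 2^(M+1)} \<union> {p. prime p \<and> 2^(Suc M) < p \<and> p \<le> 2^(Suc M+1)}"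
    by auto
  have "(\<Sum>p\<in>{p::nat. prime p \<and> p \<le> 2^(Suc M+1)}. real p powr (\<delta>-1))
      = (\<Sum>p\<in>{p. prime p \<and> p \<le> 2^(M+1)}. real p powr (\<delta>-1))
        + (\<Sum>p\<in>{p. prime p \<and> 2^(Suc M) < p \<and> p \<le> 2^(Suc M+1)}. real p powr (\<delta>-1))"
    unfolding split by (rule sum.union_disjoint) auto
  also have "\<dots> \<le> (1 + 8 * (\<Sum>j=1..M. (2 powr \<delta>)^j / j)) + 8 * (2 powr \<delta>)^(Suc M) / Suc M"
    using Suc.IH assms by (intro add_mono sum_primes_dyadic_powr_le) auto
  finally show ?case
    by (simp add: algebra_simps)
qed

lemma harm_le_1_plus_ln: "n \<ge> 1 \<Longrightarrow> harm n \<le> 1 + ln (real n)"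
  using euler_mascheroni_sequence_decreasing[of 1 n] by (simp add: harm_def)

text \<open>Split at j = M/2: the large j see the geometric growth, the small ones only the
  harmonic sum.\<close>
lemma sum_power_div_le:
  fixes r :: real
  assumes "r > 1" "M \<ge> 1"
  shows "(\<Sum>j=1..M. r^j / j) \<le> 2 * r^(M+1) / (M * (r - 1)) + r powr (M/2) * (1 + ln M)"
proof -
  have "r^j / j \<le> 2 / M * r^j + r powr (M/2) * (1/j)" if "j \<in> {1..M}" for j
  proof (cases "2*j \<ge> M")
    case True
    then have "1 / real j \<le> 2 / M"
      using that by (simp add: field_simps)
    then show ?thesis
      using assms mult_right_mono[of "1 / real j" "2 / M" "r^j"] by (simp add: add_increasing2)
  next
    case False
    have "r^j = r powr j"
      using assms by (simp add: powr_realpow)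
    also have "\<dots> \<le> r powr (M/2)"
      using False assms by (intro powr_mono) auto
    finally show ?thesis
      using that assms by (simp add: divide_right_mono add_increasing)
  qed
  then have "(\<Sum>j=1..M. r^j / j) \<le> (\<Sum>j=1..M. 2 / M * r^j + r powr (M/2) * (1/j))"
    by (rule sum_mono)
  also have "\<dots> = 2 / M * (\<Sum>j=1..M. r^j) + r powr (M/2) * harm M"
    by (simp add: sum.distrib sum_distrib_left harm_def inverse_eq_divide)
  also have "\<dots> \<le> 2 / M * (r^(M+1) / (r - 1)) + r powr (M/2) * (1 + ln M)"
  proof (intro add_mono mult_left_mono)
    have "(r - 1) * (\<Sum>j=1..M. r^j) = r^(M+1) - r"
      by (induction M) (simp_all add: algebra_simps)
    then show "(\<Sum>j=1..M. r^j) \<le> r^(M+1) / (r - 1)"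
      using assms by (simp add: field_simps)
    show "harm M \<le> 1 + ln M"
      using assms(2) by (rule harm_le_1_plus_ln)
  qed auto
  finally show ?thesis by simp
qed

lemma sum_two_powr_div_le:
  fixes \<delta> Lg :: real
  assumes "0 < \<delta>" "\<delta> \<le> 1" "1 \<le> Lg" "Lg \<le> M" "M \<le> Lg + 1"
  defines "V \<equiv> 2 powr (\<delta> * Lg)"
  shows "(\<Sum>j=1..M. (2 powr \<delta>)^j / j) \<le> 8 * V / ln V + 2 * sqrt V * (1 + ln (Lg + 1))"
proof -
  define r where "r = (2::real) powr \<delta>"
  have r1: "r > 1"
    unfolding r_def using assms(1) by simp
  have M1: "M \<ge> 1"
    using assms by linarith
  have r_pow: "r powr x = 2 powr (\<delta> * x)" for x
    unfolding r_def by (simp add: powr_powr)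
  have "\<delta> * M \<le> \<delta> * (Lg + 1)"
    using assms by (intro mult_left_mono) auto
  then have exps: "\<delta> * real (M+1) \<le> 2 + \<delta> * Lg" "\<delta> * (M/2) \<le> 1 + \<delta> * Lg / 2"
    using assms by (simp_all add: algebra_simps)
  have lnV: "ln V = \<delta> * Lg * ln 2"
    unfolding V_def by (simp add: ln_powr)
  have "r^(M+1) \<le> 4 * V"
    using powr_mono[OF exps(1), of 2] r1
    by (simp add: r_pow[symmetric] powr_realpow V_def powr_add)
  moreover have "M * (r - 1) \<ge> ln V"
  proof -
    have "r = exp (\<delta> * ln 2)"
      by (simp add: r_def powr_def)
    then have "r - 1 \<ge> \<delta> * ln 2"
      using exp_ge_add_one_self[of "\<delta> * ln 2"] by linarith
    then show ?thesis
      unfolding lnV using mult_mono[of Lg M "\<delta> * ln 2" "r - 1"] assms by (simp add: algebra_simps)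
  qed
  moreover have "ln V > 0"
    unfolding lnV using assms by simp
  ultimately have "2 * r^(M+1) / (M * (r - 1)) \<le> 2 * (4 * V) / ln V"
    using r1 by (intro frac_le) (auto simp: V_def)
  moreover have "r powr (M/2) \<le> 2 * sqrt V"
    using powr_mono[OF exps(2), of 2]
    by (simp add: r_pow V_def powr_add powr_half_sqrt[symmetric] powr_powr)
  moreover have "ln M \<le> ln (Lg + 1)"
    using assms M1 by simp
  ultimately have "2 * r^(M+1) / (M * (r - 1)) + r powr (M/2) * (1 + ln M)
      \<le> 8 * V / ln V + 2 * sqrt V * (1 + ln (Lg + 1))"
    using M1 by (intro add_mono mult_mono) (auto simp: V_def)
  then show ?thesis
    using sum_power_div_le[OF r1 M1] unfolding r_def by linarith
qed

lemma sum_primes_powr_le: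
  fixes y \<delta> :: real
  assumes "y \<ge> 2" "0 < \<delta>" "\<delta> \<le> 1"
  shows "(\<Sum>p\<in>{p::nat. prime p \<and> real p \<le> y}. real p powr (\<delta>-1))
     \<le> 1 + 8 * (8 * y powr \<delta> / ln (y powr \<delta>) + 2 * sqrt (y powr \<delta>) * (1 + ln (log 2 y + 1)))"
proof -
  define Lg where "Lg = log 2 y"
  define M where "M = nat \<lceil>Lg\<rceil>"
  have Lg1: "Lg \<ge> 1"
    unfolding Lg_def using assms by simp
  have M: "Lg \<le> M" "M \<le> Lg + 1"
    unfolding M_def using Lg1 by linarith+
  have y_eq: "y = 2 powr Lg"
    unfolding Lg_def using assms by simp
  have "y \<le> 2 powr real (M+1)"
    unfolding y_eq using M by (intro powr_mono) auto
  then have "y \<le> 2^(M+1)"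
    using powr_realpow[of 2 "M+1"] by simp
  then have "p \<le> 2^(M+1)" if "real p \<le> y" for p :: nat
    using that by (metis of_nat_le_iff of_nat_numeral of_nat_power order.trans)
  then have "{p::nat. prime p \<and> real p \<le> y} \<subseteq> {p. prime p \<and> p \<le> 2^(M+1)}"
    by auto
  then have "(\<Sum>p\<in>{p::nat. prime p \<and> real p \<le> y}. real p powr (\<delta>-1))
      \<le> (\<Sum>p\<in>{p::nat. prime p \<and> p \<le> 2^(M+1)}. real p powr (\<delta>-1))"
    by (rule sum_mono2[rotated]) auto
  also have "\<dots> \<le> 1 + 8 * (\<Sum>j=1..M. (2 powr \<delta>)^j / j)"
    using assms by (intro sum_primes_le_two_pow_powr_le) auto
  also have "\<dots> \<le> 1 + 8 * (8 * y powr \<delta> / ln (y powr \<delta>) + 2 * sqrt (y powr \<delta>) * (1 + ln (Lg + 1)))"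
  proof -
    have "y powr \<delta> = 2 powr (\<delta> * Lg)"
      by (simp add: y_eq powr_powr mult.commute)
    then show ?thesis
      using sum_two_powr_div_le[OF assms(2,3) Lg1 M]
      by (simp only:) (auto intro: add_left_mono mult_left_mono)
  qed
  finally show ?thesis
    unfolding Lg_def .
qed

lemma geometric_sum_le_exp:
  fixes q :: real
  assumes "0 \<le> q" "q \<le> 3/4"
  shows "(\<Sum>k\<le>K. q^k) \<le> exp (4 * q)"
proof -
  have "(\<Sum>k\<le>K. q^k) = (\<Sum>k<Suc K. q^k)"
    by (simp add: lessThan_Suc_atMost)
  also have "\<dots> = (1 - q^Suc K) / (1 - q)"
    using assms by (subst sum_gp_strict) auto
  also have "\<dots> \<le> 1 / (1 - q)"
    using assms by (intro divide_right_mono) auto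
  also have "\<dots> \<le> exp (4 * q)"
  proof -
    have "ln (1 / (1 - q)) \<le> 1 / (1 - q) - 1"
      using assms by (intro ln_le_minus_one) auto
    also have "\<dots> = q / (1 - q)"
      using assms by (simp add: field_simps)
    also have "\<dots> \<le> 4 * q"
      using assms by (simp add: field_simps mult_left_mono)
    finally have "exp (ln (1 / (1 - q))) \<le> exp (4 * q)"
      by simp
    then show ?thesis
      using assms by simp
  qed
  finally show ?thesis .
qed

lemma prime_factorization_nat_superset:
  fixes n :: nat
  assumes "finite P" "\<And>p. p \<in> P \<Longrightarrow> prime p" "n > 0" "prime_factors n \<subseteq> P"
  shows "n = (\<Prod>p\<in>P. p ^ multiplicity p n)"
proof -
  have "n = (\<Prod>p\<in>prime_factors n. p ^ multiplicity p n)"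
    using assms(3) by (rule prime_factorization_nat)
  also have "\<dots> = (\<Prod>p\<in>P. p ^ multiplicity p n)"
    using assms by (intro prod.mono_neutral_left) (auto simp: prime_factors_multiplicity)
  finally show ?thesis .
qed

text \<open>Each n \<in> S is a distinct term of the Euler product \<Prod>_{p \<in> P} \<Sum>_k p^(-k\<sigma>), and
  p^(-\<sigma>) \<le> 2^(-1/2) \<le> 3/4 bounds each factor by exp (4 p^(-\<sigma>)).\<close>
lemma sum_powr_le_exp_sum_primes:
  fixes S P :: "nat set" and \<sigma> :: real
  assumes "finite S" "finite P" "\<And>p. p \<in> P \<Longrightarrow> prime p"
    and "\<And>n. n \<in> S \<Longrightarrow> n > 0 \<and> prime_factors n \<subseteq> P" and "1/2 \<le> \<sigma>"
  shows "(\<Sum>n\<in>S. real n powr (-\<sigma>)) \<le> exp (4 * (\<Sum>p\<in>P. real p powr (-\<sigma>)))"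
proof -
  define q where "q p = real p powr (-\<sigma>)" for p :: nat
  define g where "g n = restrict (\<lambda>p. multiplicity p n) P" for n :: nat
  obtain K where K: "\<And>n. n \<in> S \<Longrightarrow> n \<le> K"
    using finite_nat_set_iff_bounded_le[THEN iffD1, OF assms(1)] by blast
  have factorization: "n = (\<Prod>p\<in>P. p ^ g n p)" if "n \<in> S" for n
  proof -
    have "n = (\<Prod>p\<in>P. p ^ multiplicity p n)"
      using assms(4)[OF that] by (intro prime_factorization_nat_superset assms(2,3)) auto
    also have "\<dots> = (\<Prod>p\<in>P. p ^ g n p)"
      by (intro prod.cong) (auto simp: g_def)
    finally show ?thesis .
  qed
  have q_n: "real n powr (-\<sigma>) = (\<Prod>p\<in>P. q p ^ g n p)" if "n \<in> S" for n
  proof -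
    have "real n = (\<Prod>p\<in>P. real p ^ g n p)"
      by (subst factorization[OF that]) simp
    then have "real n powr (-\<sigma>) = (\<Prod>p\<in>P. (real p ^ g n p) powr (-\<sigma>))"
      by (simp add: prod_powr_distrib)
    also have "\<dots> = (\<Prod>p\<in>P. q p ^ g n p)"
    proof (rule prod.cong[OF refl])
      fix p assume "p \<in> P"
      then have "real p > 0"
        using assms(3) prime_gt_0_nat by simp
      then have "(real p ^ g n p) powr (-\<sigma>) = (real p powr real (g n p)) powr (-\<sigma>)"
        by (simp add: powr_realpow)
      also have "\<dots> = real p powr (real (g n p) * (-\<sigma>))"
        by (rule powr_powr)
      also have "\<dots> = q p ^ g n p"
        using \<open>real p > 0\<close> by (simp add: q_def powr_power)
      finally show "(real p ^ g n p) powr (-\<sigma>) = q p ^ g n p" .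
    qed
    finally show ?thesis .
  qed
  have inj: "inj_on g S"
  proof (rule inj_onI)
    fix m n assume "m \<in> S" "n \<in> S" "g m = g n"
    have "m = (\<Prod>p\<in>P. p ^ g m p)"
      using \<open>m \<in> S\<close> by (rule factorization)
    also have "\<dots> = n"
      using factorization[OF \<open>n \<in> S\<close>] \<open>g m = g n\<close> by simp
    finally show "m = n" .
  qed
  have image: "g ` S \<subseteq> PiE P (\<lambda>_. {..K})"
  proof -
    have "multiplicity p n \<le> K" if "p \<in> P" "n \<in> S" for p n
    proof -
      have "multiplicity p n < 2 ^ multiplicity p n"
        by (rule less_exp)
      also have "\<dots> \<le> p ^ multiplicity p n"
        using assms(3)[OF that(1)] by (intro power_mono) (auto simp: prime_ge_2_nat)
      also have "\<dots> \<le> n"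
        using assms(4)[OF that(2)] by (intro dvd_imp_le multiplicity_dvd) auto
      finally show ?thesis
        using K[OF that(2)] by simp
    qed
    then show ?thesis
      unfolding g_def by auto
  qed
  have q: "0 \<le> q p \<and> q p \<le> 3/4" if "p \<in> P" for p
  proof -
    have "real p \<ge> 2"
      using assms(3)[OF that] prime_ge_2_nat by simp
    then have "q p \<le> 2 powr (-\<sigma>)"
      unfolding q_def using assms(5) by (intro powr_mono2') auto
    also have "\<dots> \<le> 2 powr (-1/2)"
      using assms(5) by (intro powr_mono) auto
    also have "\<dots> = 1 / sqrt 2"
      by (simp add: powr_minus_divide powr_half_sqrt)
    also have "\<dots> \<le> 3/4"
      using real_le_rsqrt[of "4/3" 2] by (simp add: power2_eq_square field_simps)
    finally show ?thesis
      unfolding q_def by simp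
  qed
  have "(\<Sum>n\<in>S. (\<Prod>p\<in>P. q p ^ g n p)) = (\<Sum>f\<in>g ` S. (\<Prod>p\<in>P. q p ^ f p))"
    by (rule sum.reindex[OF inj, symmetric, unfolded comp_def])
  also have "\<dots> \<le> (\<Sum>f\<in>PiE P (\<lambda>_. {..K}). (\<Prod>p\<in>P. q p ^ f p))"
    using assms(2) q by (intro sum_mono2 image finite_PiE prod_nonneg) auto
  also have "\<dots> = (\<Prod>p\<in>P. (\<Sum>k\<le>K. q p ^ k))"
    using assms(2) by (rule prod_sum_PiE[symmetric]) auto
  also have "\<dots> \<le> (\<Prod>p\<in>P. exp (4 * q p))"
    using q by (intro prod_mono) (auto intro!: sum_nonneg geometric_sum_le_exp)
  also have "\<dots> = exp (4 * (\<Sum>p\<in>P. q p))"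
    using assms(2) by (simp add: exp_sum sum_distrib_left)
  finally show ?thesis
    using q_n by (simp add: q_def)
qed

lemma finite_smooth_range: "finite (smooth_range X h)"
  by (rule finite_subset[of _ "{..nat \<lfloor>4*X\<rfloor>}"]) (auto simp: smooth_range_def le_nat_floor)

text \<open>Rankin's trick: every n \<le> 4X satisfies 1 \<le> (4X/n)^\<sigma>.\<close>
lemma card_smooth_range_le:
  fixes X h y \<sigma> :: real
  assumes "X > 0" "h \<le> y" "1/2 \<le> \<sigma>"
  shows "card (smooth_range X h) \<le>
     (4*X) powr \<sigma> * exp (4 * (\<Sum>p\<in>{p::nat. prime p \<and> real p \<le> y}. real p powr (-\<sigma>)))"
proof -
  define S where "S = smooth_range X h"
  define P where "P = {p::nat. prime p \<and> real p \<le> y}"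
  have S: "X \<le> real n" "real n \<le> 4*X" "n > 0" "\<And>p. prime p \<Longrightarrow> p dvd n \<Longrightarrow> real p \<le> h"
    if "n \<in> S" for n
    using that assms(1) by (auto simp: S_def smooth_range_def)
  have "prime_factors n \<subseteq> P" if "n \<in> S" for n
  proof
    fix p assume "p \<in> prime_factors n"
    then have "prime p" "real p \<le> h"
      using S(4)[OF that] by (auto simp: in_prime_factors_iff)
    then show "p \<in> P"
      using assms(2) by (simp add: P_def)
  qed
  moreover have "finite P"
    by (rule finite_subset[of _ "{..nat \<lfloor>y\<rfloor>}"]) (auto simp: P_def le_nat_floor)
  moreover have "finite S"
    unfolding S_def by (rule finite_smooth_range)
  ultimately have euler: "(\<Sum>n\<in>S. real n powr (-\<sigma>)) \<le> exp (4 * (\<Sum>p\<in>P. real p powr (-\<sigma>)))"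
    using S(3) assms(3) by (intro sum_powr_le_exp_sum_primes) (auto simp: P_def)
  have "1 \<le> (4*X) powr \<sigma> * real n powr (-\<sigma>)" if "n \<in> S" for n
  proof -
    have "1 \<le> (4*X / real n) powr \<sigma>"
      using S[OF that] assms by (intro ge_one_powr_ge_zero) (auto simp: field_simps)
    also have "\<dots> = (4*X) powr \<sigma> * real n powr (-\<sigma>)"
      using S[OF that] assms(1) by (simp add: powr_divide powr_minus_divide)
    finally show ?thesis .
  qed
  then have "(\<Sum>n\<in>S. 1) \<le> (\<Sum>n\<in>S. (4*X) powr \<sigma> * real n powr (-\<sigma>))"
    by (rule sum_mono)
  then have "real (card S) \<le> (\<Sum>n\<in>S. (4*X) powr \<sigma> * real n powr (-\<sigma>))"
    by simp
  also have "\<dots> = (4*X) powr \<sigma> * (\<Sum>n\<in>S. real n powr (-\<sigma>))"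
    by (simp add: sum_distrib_left)
  also have "\<dots> \<le> (4*X) powr \<sigma> * exp (4 * (\<Sum>p\<in>P. real p powr (-\<sigma>)))"
    using euler by (intro mult_left_mono) auto
  finally show ?thesis
    unfolding S_def P_def .
qed

lemma divide_of_nat_powr_eq_cis:
  fixes n :: nat and l :: int and t :: real
  assumes "n > 0"
  shows "of_int l / of_nat n powr (1/2 + \<i> * of_real t) = of_real (l / sqrt n) * cis (- (t * ln n))"
proof -
  have "(of_nat n :: complex) powr (1/2 + \<i> * of_real t) = exp ((1/2 + \<i> * of_real t) * of_real (ln n))"
    using assms by (simp add: powr_def Ln_of_nat)
  also have "(1/2 + \<i> * of_real t) * of_real (ln n) = of_real (ln n / 2) + \<i> * of_real (t * ln n)"
    by (simp add: algebra_simps)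
  also have "exp \<dots> = of_real (exp (ln n / 2)) * cis (t * ln n)"
    by (simp add: exp_add cis_conv_exp flip: exp_of_real)
  also have "exp (ln (real n) / 2) = sqrt n"
    using assms by (simp add: powr_half_sqrt[symmetric] powr_def)
  finally have "(of_nat n :: complex) powr (1/2 + \<i> * of_real t) = of_real (sqrt n) * cis (t * ln n)" .
  then have "of_int l / of_nat n powr (1/2 + \<i> * of_real t)
      = of_int l * (inverse (of_real (sqrt n)) * inverse (cis (t * ln n)))"
    by (simp only: divide_inverse inverse_mult_distrib)
  also have "\<dots> = of_real (l / sqrt n) * cis (- (t * ln n))"
    by (simp add: cis_inverse of_real_inverse divide_inverse)
  finally show ?thesis .
qed

lemma smooth_dirichlet_poly_eq_sum_cis:
  assumes "X > 0"
  shows "smooth_dirichlet_poly X h t =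
     (\<Sum>n\<in>smooth_range X h. of_real (liouville n / sqrt n) * cis (- (t * ln n)))"
  unfolding smooth_dirichlet_poly_def
  using assms by (intro sum.cong refl divide_of_nat_powr_eq_cis) (auto simp: smooth_range_def)

lemma cmod_sum_cis_squared:
  fixes b w :: "'a \<Rightarrow> real"
  shows "(cmod (\<Sum>a\<in>S. of_real (b a) * cis (- (t * w a))))^2 =
     (\<Sum>a\<in>S. \<Sum>c\<in>S. b a * b c * cos (t * (w a - w c)))"
proof -
  have "(cmod (\<Sum>a\<in>S. of_real (b a) * cis (- (t * w a))))^2 =
      (\<Sum>a\<in>S. b a * cos (t * w a))^2 + (\<Sum>a\<in>S. b a * sin (t * w a))^2"
    by (simp add: cmod_power2 Re_sum Im_sum sum_negf)
  also have "\<dots> = (\<Sum>a\<in>S. \<Sum>c\<in>S. b a * b c * cos (t * (w a - w c)))"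
    by (simp add: power2_eq_square sum_product sum.distrib[symmetric] right_diff_distrib
        cos_diff algebra_simps)
  finally show ?thesis .
qed

definition cos_primitive :: "real \<Rightarrow> real \<Rightarrow> real" where
  "cos_primitive w t = (if w = 0 then t else sin (t * w) / w)"

lemma has_real_derivative_cos_primitive:
  "(cos_primitive w has_real_derivative cos (t * w)) (at t)"
proof (cases "w = 0")
  case True
  then show ?thesis
    by (simp add: cos_primitive_def[abs_def])
next
  case False
  have "((\<lambda>t. sin (t * w) / w) has_real_derivative cos (t * w) * (1 * w) / w) (at t)"
    using False by (intro derivative_eq_intros) auto
  then show ?thesis
    using False by (simp add: cos_primitive_def[abs_def])
qed

lemma has_integral_cos_mult:
  assumes "A \<le> B"
  shows "((\<lambda>t. c * cos (t * w)) has_integral c * (cos_primitive w B - cos_primitive w A)) {A..B}"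
  using fundamental_theorem_of_calculus[OF assms,
      of "\<lambda>t. c * cos_primitive w t" "\<lambda>t. c * cos (t * w)"]
  by (auto simp: right_diff_distrib has_real_derivative_iff_has_vector_derivative[symmetric]
      intro!: has_field_derivative_at_within DERIV_cmult has_real_derivative_cos_primitive)

lemma abs_cos_primitive_diff_le:
  assumes "w \<noteq> 0"
  shows "\<bar>cos_primitive w B - cos_primitive w A\<bar> \<le> 2 / \<bar>w\<bar>"
proof -
  have "\<bar>sin (B * w) - sin (A * w)\<bar> \<le> 2"
    using abs_sin_le_one[of "B * w"] abs_sin_le_one[of "A * w"] by linarith
  then show ?thesis
    using assms by (simp add: cos_primitive_def diff_divide_distrib[symmetric] abs_divide
        divide_right_mono)
qed

lemma abs_ln_diff_ge:
  fixes Y m n :: real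
  assumes "0 < m" "0 < n" "m \<le> Y" "n \<le> Y"
  shows "\<bar>ln m - ln n\<bar> \<ge> \<bar>m - n\<bar> / Y"
proof -
  have "ln b - ln a \<ge> (b - a) / Y" if "0 < a" "a \<le> b" "b \<le> Y" for a b :: real
  proof -
    have "ln (a / b) \<le> a / b - 1"
      using that by (intro ln_le_minus_one) auto
    then have "ln b - ln a \<ge> (b - a) / b"
      using that by (simp add: ln_div field_simps)
    moreover have "(b - a) / b \<ge> (b - a) / Y"
      using that by (intro divide_left_mono) auto
    ultimately show ?thesis by linarith
  qed
  from this[of m n] this[of n m] show ?thesis
    using assms by (cases "n \<le> m") auto
qed

lemma sum_inverse_inj_le_harm:
  fixes A :: "'a set" and \<phi> :: "'a \<Rightarrow> nat"
  assumes "finite A" "inj_on \<phi> A" "\<phi> ` A \<subseteq> {1..K}"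
  shows "(\<Sum>a\<in>A. 1 / real (\<phi> a)) \<le> harm K"
proof -
  have "(\<Sum>a\<in>A. 1 / real (\<phi> a)) = (\<Sum>d\<in>\<phi> ` A. 1 / real d)"
    using assms(2) by (simp add: sum.reindex)
  also have "\<dots> \<le> (\<Sum>d\<in>{1..K}. 1 / real d)"
    using assms(3) by (intro sum_mono2) auto
  finally show ?thesis
    by (simp add: harm_def inverse_eq_divide)
qed

lemma sum_inverse_distance_le:
  fixes S :: "nat set"
  assumes "finite S" "S \<subseteq> {..K}" "m \<in> S"
  shows "(\<Sum>n\<in>S - {m}. 1 / \<bar>real m - real n\<bar>) \<le> 2 * harm K"
proof -
  define A1 where "A1 = {n\<in>S. n < m}"
  define A2 where "A2 = {n\<in>S. m < n}"
  have split: "S - {m} = A1 \<union> A2"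
    unfolding A1_def A2_def by auto
  have "(\<Sum>n\<in>S - {m}. 1 / \<bar>real m - real n\<bar>) =
      (\<Sum>n\<in>A1. 1 / \<bar>real m - real n\<bar>) + (\<Sum>n\<in>A2. 1 / \<bar>real m - real n\<bar>)"
    unfolding split by (rule sum.union_disjoint) (use assms(1) in \<open>auto simp: A1_def A2_def\<close>)
  also have "\<dots> = (\<Sum>n\<in>A1. 1 / real (m - n)) + (\<Sum>n\<in>A2. 1 / real (n - m))"
    by (intro arg_cong2[where f = "(+)"] sum.cong) (auto simp: A1_def A2_def of_nat_diff)
  also have "(\<Sum>n\<in>A1. 1 / real (m - n)) \<le> harm K"
  proof (rule sum_inverse_inj_le_harm)
    show "finite A1" "inj_on (\<lambda>n. m - n) A1"
      using assms(1) by (auto simp: A1_def inj_on_def)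
    have "m \<le> K"
      using assms(2,3) by auto
    then show "(\<lambda>n. m - n) ` A1 \<subseteq> {1..K}"
      by (auto simp: A1_def)
  qed
  also have "(\<Sum>n\<in>A2. 1 / real (n - m)) \<le> harm K"
    using assms by (intro sum_inverse_inj_le_harm) (force simp: A2_def inj_on_def)+
  finally show ?thesis by simp
qed

lemma off_diagonal_term_le:
  fixes X c A B :: real and m n :: nat
  assumes "X > 0" "X \<le> m" "m \<le> 4*X" "X \<le> n" "n \<le> 4*X" "m \<noteq> n" "\<bar>c\<bar> \<le> 1/X"
  defines "w \<equiv> ln (real m) - ln (real n)"
  shows "c * (cos_primitive w B - cos_primitive w A) \<le> 8 / \<bar>real m - real n\<bar>"
proof -
  have d: "\<bar>real m - real n\<bar> / (4*X) > 0"
    using assms by simp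
  have w: "\<bar>w\<bar> \<ge> \<bar>real m - real n\<bar> / (4*X)"
    unfolding w_def using assms by (intro abs_ln_diff_ge) auto
  then have "w \<noteq> 0"
    using d by auto
  have "c * (cos_primitive w B - cos_primitive w A) \<le> \<bar>c\<bar> * \<bar>cos_primitive w B - cos_primitive w A\<bar>"
    by (metis abs_ge_self abs_mult)
  also have "\<dots> \<le> (1/X) * (2 / \<bar>w\<bar>)"
    using assms(1,7) abs_cos_primitive_diff_le[OF \<open>w \<noteq> 0\<close>] by (intro mult_mono) auto
  also have "\<dots> \<le> (1/X) * (2 / (\<bar>real m - real n\<bar> / (4*X)))"
    using w d assms(1) by (intro mult_left_mono divide_left_mono mult_pos_pos) auto
  also have "\<dots> = 8 / \<bar>real m - real n\<bar>"
    using assms(1) by (simp add: field_simps)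
  finally show ?thesis .
qed

text \<open>A weak form of the Montgomery--Vaughan mean value theorem: the off-diagonal terms are
  controlled by the spacing |log m - log n| \<ge> |m - n| / 4X.\<close>
lemma integral_cmod_sum_cis_squared_le:
  fixes S :: "nat set" and b :: "nat \<Rightarrow> real" and X A B :: real
  assumes "finite S" "X \<ge> 1" "A \<le> B"
    and S: "\<And>n. n \<in> S \<Longrightarrow> X \<le> n \<and> n \<le> 4*X \<and> (b n)^2 \<le> 1/X"
  shows "integral {A..B} (\<lambda>t. (cmod (\<Sum>n\<in>S. of_real (b n) * cis (- (t * ln n))))^2)
    \<le> card S * ((B - A) / X + 16 * (1 + ln (4*X)))"
proof -
  define K where "K = nat \<lfloor>4*X\<rfloor>"
  define I where "I m n = b m * b n *
      (cos_primitive (ln m - ln n) B - cos_primitive (ln m - ln n) A)" for m n :: nat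
  have "((\<lambda>t. (cmod (\<Sum>n\<in>S. of_real (b n) * cis (- (t * ln n))))^2)
      has_integral (\<Sum>m\<in>S. \<Sum>n\<in>S. I m n)) {A..B}"
    unfolding cmod_sum_cis_squared I_def
    by (intro has_integral_sum assms(1) ballI has_integral_cos_mult assms(3))
  then have integral_eq: "integral {A..B} (\<lambda>t. (cmod (\<Sum>n\<in>S. of_real (b n) * cis (- (t * ln n))))^2)
      = (\<Sum>m\<in>S. \<Sum>n\<in>S. I m n)"
    by (rule integral_unique)
  have "1 \<le> K" "real K \<le> 4*X"
    unfolding K_def using assms(2) by linarith+
  then have "ln K \<le> ln (4*X)"
    by simp
  then have "harm K \<le> 1 + ln (4*X)"
    using harm_le_1_plus_ln[OF \<open>1 \<le> K\<close>] by linarith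
  moreover have "S \<subseteq> {..K}"
    using S unfolding K_def by (auto simp: le_nat_floor)
  ultimately have distances: "(\<Sum>n\<in>S - {m}. 1 / \<bar>real m - real n\<bar>) \<le> 2 * (1 + ln (4*X))"
    if "m \<in> S" for m
    using sum_inverse_distance_le[OF assms(1) _ that] by (meson mult_left_mono order.trans zero_le_numeral)
  have "(\<Sum>n\<in>S. I m n) \<le> (B - A) / X + 16 * (1 + ln (4*X))" if m: "m \<in> S" for m
  proof -
    have "I m m = (b m)^2 * (B - A)"
      unfolding I_def by (simp add: cos_primitive_def power2_eq_square)
    also have "\<dots> \<le> (B - A) / X"
      using S[OF m] assms(3) mult_right_mono[of "(b m)^2" "1/X" "B - A"] by simp
    finally have diagonal: "I m m \<le> (B - A) / X" .
    have "I m n \<le> 8 / \<bar>real m - real n\<bar>" if n: "n \<in> S - {m}" for n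
    proof -
      have "\<bar>b m * b n\<bar> \<le> ((b m)^2 + (b n)^2) / 2"
        using sum_squares_bound[of "\<bar>b m\<bar>" "\<bar>b n\<bar>"] by (simp add: abs_mult)
      then show ?thesis
        unfolding I_def using S[OF m] S[of n] n assms(2) by (intro off_diagonal_term_le) auto
    qed
    then have "(\<Sum>n\<in>S - {m}. I m n) \<le> (\<Sum>n\<in>S - {m}. 8 / \<bar>real m - real n\<bar>)"
      by (rule sum_mono)
    also have "\<dots> = 8 * (\<Sum>n\<in>S - {m}. 1 / \<bar>real m - real n\<bar>)"
      by (simp add: sum_distrib_left)
    also have "\<dots> \<le> 16 * (1 + ln (4*X))"
      using distances[OF m] by simp
    finally show ?thesis
      using diagonal sum.remove[OF assms(1) m, of "I m"] by simp
  qed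
  then show ?thesis
    unfolding integral_eq by (rule sum_bounded_above)
qed

lemma integral_smooth_dirichlet_poly_le:
  fixes X h A B :: real
  assumes "X \<ge> 1" "A \<le> B"
  shows "integral {A..B} (\<lambda>t. (cmod (smooth_dirichlet_poly X h t))^2)
    \<le> card (smooth_range X h) * ((B - A) / X + 16 * (1 + ln (4*X)))"
proof -
  have "(real_of_int (liouville n) / sqrt n)^2 \<le> 1 / X" if "n \<in> smooth_range X h" for n
  proof -
    have "(real_of_int (liouville n))^2 = 1"
      unfolding liouville_def by (simp flip: power_mult)
    moreover have "X \<le> real n"
      using that by (simp add: smooth_range_def)
    ultimately show ?thesis
      using assms(1) by (simp add: power_divide divide_left_mono)
  qed
  then show ?thesis
    unfolding smooth_dirichlet_poly_eq_sum_cis[OF order.strict_trans2[OF zero_less_one assms(1)]]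
    using assms by (intro integral_cmod_sum_cis_squared_le finite_smooth_range)
      (auto simp: smooth_range_def)
qed

lemma normalized_integral_smooth_dirichlet_poly_le:
  fixes X h T :: real
  assumes "X \<ge> 1" "h > 0" "X / h \<le> T" "T \<le> X"
    and card: "card (smooth_range X h) * (1 + 16 * h * (1 + ln (4*X))) \<le> X"
  shows "1 / (h * T) * integral {sqrt X..T} (\<lambda>t. (cmod (smooth_dirichlet_poly X h t))^2) \<le> 1 / h"
proof (cases "T < sqrt X")
  case True
  then show ?thesis
    using assms(2) by simp
next
  case False
  define N where "N = real (card (smooth_range X h))"
  define Q where "Q = 1 + ln (4*X)"
  have "T > 0"
    using False real_sqrt_ge_one[OF assms(1)] by linarith
  have "Q \<ge> 1" "N \<ge> 0"
    using assms(1) by (simp_all add: N_def Q_def)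
  have "X \<le> h * T"
    using assms(2,3) by (simp add: field_simps)
  have "integral {sqrt X..T} (\<lambda>t. (cmod (smooth_dirichlet_poly X h t))^2)
      \<le> N * ((T - sqrt X) / X + 16 * Q)"
    unfolding N_def Q_def using assms False by (intro integral_smooth_dirichlet_poly_le) auto
  also have "\<dots> \<le> N * (T / X + 16 * Q * (h * T / X))"
    using \<open>N \<ge> 0\<close> \<open>Q \<ge> 1\<close> \<open>X \<le> h * T\<close> assms(1)
    by (intro mult_left_mono add_mono divide_right_mono) (auto simp: field_simps)
  also have "\<dots> = T / X * (N * (1 + 16 * h * Q))"
    using assms(1) by (simp add: field_simps)
  also have "\<dots> \<le> T / X * X"
    using card \<open>T > 0\<close> assms(1) unfolding N_def Q_def by (intro mult_left_mono) auto
  also have "\<dots> = T"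
    using assms(1) by simp
  finally show ?thesis
    using \<open>T > 0\<close> assms(2) by (simp add: field_simps)
qed

lemma card_smooth_range_le_exp:
  fixes X h y \<delta> :: real
  assumes "X > 0" "2 \<le> y" "h \<le> y" "0 < \<delta>" "\<delta> \<le> 1/2"
  shows "card (smooth_range X h) \<le> (4*X) powr (1 - \<delta>) *
    exp (4 * (1 + 8 * (8 * y powr \<delta> / ln (y powr \<delta>) + 2 * sqrt (y powr \<delta>) * (1 + ln (log 2 y + 1)))))"
proof -
  have "card (smooth_range X h)
      \<le> (4*X) powr (1 - \<delta>) * exp (4 * (\<Sum>p\<in>{p::nat. prime p \<and> real p \<le> y}. real p powr (\<delta> - 1)))"
    using card_smooth_range_le[of X h y "1 - \<delta>"] assms by simp
  also have "\<dots> \<le> (4*X) powr (1 - \<delta>) *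
    exp (4 * (1 + 8 * (8 * y powr \<delta> / ln (y powr \<delta>) + 2 * sqrt (y powr \<delta>) * (1 + ln (log 2 y + 1)))))"
    using sum_primes_powr_le[of y \<delta>] assms by (intro mult_left_mono) auto
  finally show ?thesis .
qed

lemma ln_4_plus_ln_17_le: "ln 4 + ln 17 \<le> (10::real)"
proof -
  have "ln 4 + ln 17 = ln (68::real)"
    using ln_mult[of 4 17] by simp
  also have "\<dots> \<le> ln ((2::real)^7)"
    by simp
  also have "\<dots> = 7 * ln 2"
    using ln_realpow[of 2 7] by simp
  also have "\<dots> \<le> 10"
    using ln_le_minus_one[of "2::real"] by simp
  finally show ?thesis .
qed

text \<open>With \<delta> = l / 2H, Rankin's bound gives N \<le> (4X)^(1-\<delta>) exp (4E) with E = O(sqrt L / l), and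
  \<delta> L = s / (1-e) \<ge> (1+e) s beats the loss H = (1-e) s from the factor h by 2es; the
  hypothesis lower_order says that this absorbs all remaining terms.\<close>
lemma card_smooth_range_mul_le:
  fixes X h e :: real
  defines "L \<equiv> ln X" and "l \<equiv> ln (ln X)" and "s \<equiv> sqrt (ln X * ln (ln X) / 2)"
  defines "H \<equiv> (1 - e) * s"
  assumes X: "exp 1 < X" and e: "0 < e" "e < 1" and H: "1 \<le> H" "l \<le> H"
    and h: "2 \<le> h" "h \<le> exp H"
    and lower_order: "10 + 4 * (1 + 8 * (16 * sqrt L / l + 2 * sqrt (sqrt L) * (1 + ln (H / ln 2 + 1))))
      + ln (3 + L) \<le> 2 * e * s"
  shows "card (smooth_range X h) * (1 + 16 * h * (1 + ln (4*X))) \<le> X"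
proof -
  define \<delta> where "\<delta> = l / (2 * H)"
  define E where "E = 1 + 8 * (16 * sqrt L / l + 2 * sqrt (sqrt L) * (1 + ln (H / ln 2 + 1)))"
  have "0 < X"
    using X exp_gt_zero[of 1] by linarith
  have "1 < L"
    using ln_less_cancel_iff[of "exp 1" X] X \<open>0 < X\<close> by (simp add: L_def)
  have "0 < l"
    using \<open>1 < L\<close> by (simp add: l_def L_def)
  have "0 < s" "L * l = 2 * (s * s)"
    using \<open>1 < L\<close> \<open>0 < l\<close> by (simp_all add: s_def L_def l_def)
  have \<delta>: "0 < \<delta>" "\<delta> \<le> 1/2" "\<delta> * H = l / 2"
    using H \<open>0 < l\<close> by (auto simp: \<delta>_def field_simps)
  have \<delta>_L: "(1 + e) * s \<le> \<delta> * L"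
  proof -
    have "\<delta> * L = 2 * (s * s) / (2 * ((1 - e) * s))"
      unfolding \<delta>_def H_def using \<open>L * l = 2 * (s * s)\<close> by (simp add: mult.commute)
    also have "\<dots> = s / (1 - e)"
      using \<open>0 < s\<close> e by (simp add: field_simps)
    finally show ?thesis
      using \<open>0 < s\<close> e mult_nonneg_nonneg[of "e * e" s]
      by (simp add: pos_le_divide_eq algebra_simps)
  qed
  have ln_4X: "ln (4*X) = ln 4 + L"
    using \<open>0 < X\<close> by (simp add: L_def ln_mult)
  have "2 \<le> exp H"
    using H(1) exp_ge_add_one_self[of H] by linarith
  moreover have "exp H powr \<delta> = sqrt L"
    using \<delta>(3) \<open>1 < L\<close> by (simp add: powr_def mult.commute powr_half_sqrt[symmetric] l_def L_def)
  moreover have "8 * sqrt L / ln (sqrt L) = 16 * sqrt L / l" "log 2 (exp H) = H / ln 2"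
    using \<open>1 < L\<close> by (simp_all add: ln_sqrt log_def l_def L_def)
  ultimately have "card (smooth_range X h) \<le> (4*X) powr (1 - \<delta>) * exp (4 * E)"
    using card_smooth_range_le_exp[of X "exp H" h \<delta>] \<open>0 < X\<close> \<delta> h(2) by (simp add: E_def)
  also have "\<dots> = exp ((1 - \<delta>) * ln (4*X) + 4 * E)"
    using \<open>0 < X\<close> by (simp add: powr_def exp_add)
  finally have card: "card (smooth_range X h) \<le> exp ((1 - \<delta>) * ln (4*X) + 4 * E)" .
  have "ln 4 \<le> (2::real)"
    using ln_realpow[of 2 2] ln_le_minus_one[of "2::real"] by simp
  then have "1 + 16 * h * (1 + ln (4*X)) \<le> 1 + 16 * exp H * (3 + L)"
    using h \<open>0 < X\<close> \<open>1 < L\<close> ln_4X by (intro add_left_mono mult_mono) auto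
  also have "\<dots> \<le> 17 * exp H * (3 + L)"
    using \<open>2 \<le> exp H\<close> \<open>1 < L\<close> H(1) mult_mono[of 1 "exp H" 1 "3 + L"] by simp
  also have "\<dots> = exp (ln 17 + H + ln (3 + L))"
    using \<open>1 < L\<close> by (simp add: exp_add)
  finally have factor: "1 + 16 * h * (1 + ln (4*X)) \<le> exp (ln 17 + H + ln (3 + L))" .
  have exponent: "(1 - \<delta>) * ln (4*X) + 4 * E + (ln 17 + H + ln (3 + L)) \<le> L"
  proof -
    have "(1 - \<delta>) * ln (4*X) = ln 4 + L - \<delta> * ln 4 - \<delta> * L"
      unfolding ln_4X by (simp add: algebra_simps)
    moreover have "H = s - e * s" "(1 + e) * s = s + e * s" "0 \<le> \<delta> * ln 4"
      using \<delta>(1) by (simp_all add: H_def algebra_simps)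
    ultimately show ?thesis
      using \<delta>_L lower_order ln_4_plus_ln_17_le unfolding E_def by linarith
  qed
  have "0 \<le> 1 + 16 * h * (1 + ln (4*X))"
    unfolding ln_4X using h \<open>1 < L\<close> by simp
  then have "card (smooth_range X h) * (1 + 16 * h * (1 + ln (4*X)))
      \<le> exp ((1 - \<delta>) * ln (4*X) + 4 * E) * exp (ln 17 + H + ln (3 + L))"
    using card factor by (intro mult_mono) auto
  also have "\<dots> \<le> exp L"
    using exponent by (simp flip: exp_add)
  also have "\<dots> = X"
    using \<open>0 < X\<close> by (simp add: L_def)
  finally show ?thesis .
qed

text \<open>With \<epsilon> = (log log X)^(-1/4), the condition on h in the theorem reads
  log h \<le> (1 - \<epsilon>) sqrt (log X log log X / 2).\<close>
definition smooth_eta :: "real \<Rightarrow> real" where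
  "smooth_eta X = 1/2 - (1 - ln (ln X) powr (-1/4))^2 / 2"

lemma eventually_rankin_parameters:
  defines "e \<equiv> \<lambda>L::real. ln L powr (-1/4)" and "s \<equiv> \<lambda>L::real. sqrt (L * ln L / 2)"
  defines "H \<equiv> \<lambda>L. (1 - e L) * s L"
  shows "\<forall>\<^sub>F L in at_top. 1 < L \<and> e L < 1 \<and> 1 \<le> H L \<and> ln L \<le> H L \<and>
    10 + 4 * (1 + 8 * (16 * sqrt L / ln L + 2 * sqrt (sqrt L) * (1 + ln (H L / ln 2 + 1))))
      + ln (3 + L) \<le> 2 * e L * s L"
proof -
  have "\<forall>\<^sub>F L in at_top. 1 < (L::real)" "\<forall>\<^sub>F L in at_top. e L < 1"
    "\<forall>\<^sub>F L in at_top. 1 \<le> H L" "\<forall>\<^sub>F L in at_top. ln L \<le> H L"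
    "\<forall>\<^sub>F L in at_top. 10 + 4 * (1 + 8 * (16 * sqrt L / ln L
        + 2 * sqrt (sqrt L) * (1 + ln (H L / ln 2 + 1)))) + ln (3 + L) \<le> 2 * e L * s L"
    unfolding e_def s_def H_def by real_asymp+
  then show ?thesis
    by eventually_elim blast
qed

lemma eventually_card_smooth_range_small:
  "\<forall>\<^sub>F X in at_top. \<forall>h. 2 \<le> h \<and> h \<le> exp (sqrt ((1/2 - smooth_eta X) * ln X * ln (ln X))) \<longrightarrow>
     card (smooth_range X h) * (1 + 16 * h * (1 + ln (4*X))) \<le> X"
  using eventually_compose_filterlim[OF eventually_rankin_parameters ln_at_top]
    eventually_gt_at_top[of "exp 1"]
proof eventually_elim
  case (elim X)
  define e where "e = ln (ln X) powr (-1/4)"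
  define s where "s = sqrt (ln X * ln (ln X) / 2)"
  have "0 < e" "e < 1"
    using elim by (simp_all add: e_def)
  have "(1/2 - smooth_eta X) * ln X * ln (ln X) = (1 - e)^2 * (ln X * ln (ln X) / 2)"
    by (simp add: smooth_eta_def e_def algebra_simps)
  then have "sqrt ((1/2 - smooth_eta X) * ln X * ln (ln X)) = sqrt ((1 - e)^2) * s"
    unfolding s_def by (simp only: real_sqrt_mult)
  also have "\<dots> = (1 - e) * s"
    using \<open>e < 1\<close> by simp
  finally have "sqrt ((1/2 - smooth_eta X) * ln X * ln (ln X)) = (1 - e) * s" .
  then show ?case
    using elim \<open>0 < e\<close> \<open>e < 1\<close> card_smooth_range_mul_le[of X e] by (simp add: e_def s_def)
qed

theorem mainTheorem7:
  "\<exists>\<eta> :: real \<Rightarrow> real. (\<eta> \<longlongrightarrow> 0) at_top \<and>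
   (\<exists>C :: real. \<forall>h :: real \<Rightarrow> real.
      filterlim h at_top at_top \<longrightarrow>
      (\<forall>\<^sub>F X in at_top. h X \<le> exp (sqrt ((1/2 - \<eta> X) * ln X * ln (ln X)))) \<longrightarrow>
      (\<forall>\<^sub>F X in at_top. \<forall>T. X / h X \<le> T \<and> T \<le> X \<longrightarrow>
          (1 / (h X * T)) * integral {sqrt X..T}
             (\<lambda>t. (cmod (smooth_dirichlet_poly X (h X) t))\<^sup>2) \<le> C / h X))"
proof (intro exI conjI allI impI)
  show "(smooth_eta \<longlongrightarrow> 0) at_top"
    unfolding smooth_eta_def by real_asymp
  fix h :: "real \<Rightarrow> real"
  assume "filterlim h at_top at_top"
  then have "\<forall>\<^sub>F X in at_top. 2 \<le> h X"
    by (simp add: filterlim_at_top)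
  moreover assume "\<forall>\<^sub>F X in at_top. h X \<le> exp (sqrt ((1/2 - smooth_eta X) * ln X * ln (ln X)))"
  ultimately show "\<forall>\<^sub>F X in at_top. \<forall>T. X / h X \<le> T \<and> T \<le> X \<longrightarrow>
      (1 / (h X * T)) * integral {sqrt X..T} (\<lambda>t. (cmod (smooth_dirichlet_poly X (h X) t))\<^sup>2)
        \<le> 1 / h X"
    using eventually_card_smooth_range_small eventually_ge_at_top[of 1]
  proof eventually_elim
    case (elim X)
    then have "card (smooth_range X (h X)) * (1 + 16 * h X * (1 + ln (4*X))) \<le> X"
      by blast
    with elim show ?case
      by (intro allI impI normalized_integral_smooth_dirichlet_poly_le) auto
  qed
qed

end
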